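(* Let $(\Omega,\mathcal F)$ be a measurable space, $X$ a bounded measurable function and $w$ a capacity. Then $\alpha\mapsto Q^w_\alpha(X)$ is left-continuous on $(0,1]$ and $\alpha\mapsto\overline Q^w_\alpha(X)$ is right-continuous on $[0,1)$.
   Context: A capacity is an increasing function $w:\mathcal F\to\mathbb R$ (i.e. $w(A)\le w(B)$ for $A\subseteq B$) with $w(\varnothing)=0$, $w(\Omega)=1$. $Q^w_\alpha(X)=\inf\{x\in\mathbb R: w(X\ge x)\le1-\alpha\}$ for $\alpha\in(0,1]$, and $\overline Q^w_\alpha(X)=\inf\{x\in\mathbb R: w(X\ge x)<1-\alpha\}$ for $\alpha\in[0,1)$. *)

theory Defs
  imports "HOL-Analysis.Analysis"
begin

definition capacity :: "'a measure \<Rightarrow> ('a set \<Rightarrow> real) \<Rightarrow> bool" where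
  "capacity M w \<longleftrightarrow>
     (\<forall>A\<in>sets M. \<forall>B\<in>sets M. A \<subseteq> B \<longrightarrow> w A \<le> w B) \<and> w {} = 0 \<and> w (space M) = 1"

definition lower_quantile :: "'a measure \<Rightarrow> ('a set \<Rightarrow> real) \<Rightarrow> ('a \<Rightarrow> real) \<Rightarrow> real \<Rightarrow> real" where
  "lower_quantile M w X \<alpha> = Inf {x. w {\<omega>\<in>space M. X \<omega> \<ge> x} \<le> 1 - \<alpha>}"

definition upper_quantile :: "'a measure \<Rightarrow> ('a set \<Rightarrow> real) \<Rightarrow> ('a \<Rightarrow> real) \<Rightarrow> real \<Rightarrow> real" where
  "upper_quantile M w X \<alpha> = Inf {x. w {\<omega>\<in>space M. X \<omega> \<ge> x} < 1 - \<alpha>}"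

end

theory Submission
  imports Defs
begin

text \<open>
  With \<open>F x = 1 - w {X \<ge> x}\<close>, which is nondecreasing, \<open>0\<close> below and \<open>1\<close> above the range of
  \<open>X\<close>, the two quantiles are \<open>Inf {x. \<alpha> \<le> F x}\<close> and \<open>Inf {x. \<alpha> < F x}\<close>. As \<open>\<beta>\<close> decreases
  to \<open>\<alpha>\<close>, the sets \<open>{\<beta> < F}\<close> increase to \<open>{\<alpha> < F}\<close>, so their infima converge for any \<open>F\<close>:
  right-continuity. For the non-strict sets monotonicity of \<open>F\<close> is needed: a point \<open>z\<close> below
  \<open>Inf {\<alpha> \<le> F}\<close> has \<open>F z < \<alpha>\<close>, so \<open>z\<close> stays a lower bound of \<open>{\<beta> \<le> F}\<close> for all \<open>\<beta>\<close>
  between \<open>F z\<close> and \<open>\<alpha>\<close>: left-continuity.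
\<close>

lemma continuous_at_left_Inf_superlevel:
  fixes F :: "real \<Rightarrow> real"
  assumes "mono F" and "\<beta> < \<alpha>" and "{x. \<alpha> \<le> F x} \<noteq> {}" and "bdd_below {x. \<beta> \<le> F x}"
  shows "continuous (at_left \<alpha>) (\<lambda>a. Inf {x. a \<le> F x})"
proof -
  have bdd: "bdd_below {x. a \<le> F x}" if "\<beta> \<le> a" for a
    using assms(4) by (rule bdd_below_mono) (use that in auto)
  have ne: "{x. a \<le> F x} \<noteq> {}" if "a \<le> \<alpha>" for a
    using assms(3) that by (metis (mono_tags, lifting) Collect_empty_eq order_trans)
  show ?thesis
    unfolding continuous_within
  proof (rule order_tendstoI)
    fix y assume "y < Inf {x. \<alpha> \<le> F x}"
    then obtain z where z: "y < z" "z < Inf {x. \<alpha> \<le> F x}"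
      using dense by blast
    have "F z < \<alpha>"
    proof (rule ccontr)
      assume "\<not> F z < \<alpha>"
      then have "Inf {x. \<alpha> \<le> F x} \<le> z"
        using bdd assms(2) by (intro cInf_lower) auto
      with z show False by simp
    qed
    have "y < Inf {x. b \<le> F x}" if "max \<beta> (F z) < b" "b < \<alpha>" for b
    proof -
      have "z \<le> Inf {x. b \<le> F x}"
      proof (rule cInf_greatest)
        show "{x. b \<le> F x} \<noteq> {}" using ne that by simp
        fix x assume "x \<in> {x. b \<le> F x}"
        then show "z \<le> x"
          using that monoD[OF assms(1), of x z] by (cases "x \<le> z") auto
      qed
      with z show ?thesis by simp
    qed
    then show "\<forall>\<^sub>F b in at_left \<alpha>. y < Inf {x. b \<le> F x}"
      unfolding eventually_at_left_field using assms(2) \<open>F z < \<alpha>\<close>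
      by (intro exI[of _ "max \<beta> (F z)"]) auto
  next
    fix y assume y: "Inf {x. \<alpha> \<le> F x} < y"
    have "Inf {x. b \<le> F x} < y" if "\<beta> < b" "b < \<alpha>" for b
    proof -
      have "Inf {x. b \<le> F x} \<le> Inf {x. \<alpha> \<le> F x}"
        using assms(3) that by (intro cInf_superset_mono bdd) auto
      with y show ?thesis by simp
    qed
    then show "\<forall>\<^sub>F b in at_left \<alpha>. Inf {x. b \<le> F x} < y"
      unfolding eventually_at_left_field using assms(2) by blast
  qed
qed

lemma continuous_at_right_Inf_strict_superlevel:
  fixes F :: "real \<Rightarrow> real"
  assumes "bdd_below {x. \<alpha> < F x}"
  shows "continuous (at_right \<alpha>) (\<lambda>a. Inf {x. a < F x})"
proof (cases "{x. \<alpha> < F x} = {}")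
  case True
  then have "{x. b < F x} = {}" if "\<alpha> \<le> b" for b
    using that by (auto dest: le_less_trans[of \<alpha> b])
  then have "\<forall>\<^sub>F b in at_right \<alpha>. Inf {x. b < F x} = Inf {x. \<alpha> < F x}"
    unfolding eventually_at_right_field by (intro exI[of _ "\<alpha> + 1"]) auto
  then show ?thesis
    unfolding continuous_within by (rule tendsto_eventually)
next
  case False
  have bdd: "bdd_below {x. b < F x}" if "\<alpha> \<le> b" for b
    using assms by (rule bdd_below_mono) (use that in auto)
  show ?thesis
    unfolding continuous_within
  proof (rule order_tendstoI)
    fix y assume y: "y < Inf {x. \<alpha> < F x}"
    obtain x where x: "\<alpha> < F x" using False by blast
    have "y < Inf {x. b < F x}" if "\<alpha> < b" "b < F x" for b
    proof -
      have "Inf {x. \<alpha> < F x} \<le> Inf {x. b < F x}"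
        using bdd that by (intro cInf_superset_mono) auto
      with y show ?thesis by simp
    qed
    with x show "\<forall>\<^sub>F b in at_right \<alpha>. y < Inf {x. b < F x}"
      unfolding eventually_at_right_field by blast
  next
    fix y assume "Inf {x. \<alpha> < F x} < y"
    then obtain x where x: "\<alpha> < F x" "x < y"
      using False assms by (auto simp: cInf_less_iff)
    have "Inf {x. b < F x} < y" if "\<alpha> < b" "b < F x" for b
    proof -
      have "Inf {x. b < F x} \<le> x"
        using bdd that by (intro cInf_lower) auto
      with x show ?thesis by simp
    qed
    with x show "\<forall>\<^sub>F b in at_right \<alpha>. Inf {x. b < F x} < y"
      unfolding eventually_at_right_field by blast
  qed
qed

text \<open>For a probability measure \<open>w\<close> this is the distribution function \<open>x \<mapsto> P(X < x)\<close>.\<close>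
definition capacity_cdf :: "'a measure \<Rightarrow> ('a set \<Rightarrow> real) \<Rightarrow> ('a \<Rightarrow> real) \<Rightarrow> real \<Rightarrow> real" where
  "capacity_cdf M w X x = 1 - w {\<omega>\<in>space M. X \<omega> \<ge> x}"

lemma lower_quantile_eq_Inf_capacity_cdf:
  "lower_quantile M w X \<alpha> = Inf {x. \<alpha> \<le> capacity_cdf M w X x}"
  unfolding lower_quantile_def capacity_cdf_def by (auto intro!: arg_cong[where f = Inf])

lemma upper_quantile_eq_Inf_capacity_cdf:
  "upper_quantile M w X \<alpha> = Inf {x. \<alpha> < capacity_cdf M w X x}"
  unfolding upper_quantile_def capacity_cdf_def by (auto intro!: arg_cong[where f = Inf])

lemma mono_capacity_cdf:
  assumes "capacity M w" and "X \<in> borel_measurable M"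
  shows "mono (capacity_cdf M w X)"
proof (rule monoI)
  fix x y :: real assume "x \<le> y"
  then have "{\<omega>\<in>space M. X \<omega> \<ge> y} \<subseteq> {\<omega>\<in>space M. X \<omega> \<ge> x}" by auto
  moreover have "{\<omega>\<in>space M. X \<omega> \<ge> t} \<in> sets M" for t
    using assms(2) borel_measurable_iff_ge by blast
  ultimately have "w {\<omega>\<in>space M. X \<omega> \<ge> y} \<le> w {\<omega>\<in>space M. X \<omega> \<ge> x}"
    using assms(1) unfolding capacity_def by blast
  then show "capacity_cdf M w X x \<le> capacity_cdf M w X y"
    unfolding capacity_cdf_def by simp
qed

lemma capacity_cdf_below_range:
  assumes "capacity M w" and "\<And>\<omega>. \<omega> \<in> space M \<Longrightarrow> x \<le> X \<omega>"
  shows "capacity_cdf M w X x = 0"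
proof -
  have whole: "{\<omega>\<in>space M. X \<omega> \<ge> x} = space M" using assms(2) by auto
  show ?thesis using assms(1) unfolding capacity_def capacity_cdf_def whole by simp
qed

lemma capacity_cdf_above_range:
  assumes "capacity M w" and "\<And>\<omega>. \<omega> \<in> space M \<Longrightarrow> X \<omega> < x"
  shows "capacity_cdf M w X x = 1"
proof -
  have empty: "{\<omega>\<in>space M. X \<omega> \<ge> x} = {}" using assms(2) by force
  show ?thesis using assms(1) unfolding capacity_def capacity_cdf_def empty by simp
qed

lemma bdd_below_capacity_cdf_pos:
  assumes "capacity M w" and "bounded (X ` space M)"
  shows "bdd_below {x. 0 < capacity_cdf M w X x}"
proof -
  obtain B where B: "\<And>\<omega>. \<omega> \<in> space M \<Longrightarrow> \<bar>X \<omega>\<bar> \<le> B"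
    using assms(2) unfolding bounded_iff by auto
  have zero: "capacity_cdf M w X x = 0" if "x \<le> -B" for x
  proof (rule capacity_cdf_below_range[OF assms(1)])
    fix \<omega> assume "\<omega> \<in> space M"
    with B[of \<omega>] that show "x \<le> X \<omega>" by linarith
  qed
  show ?thesis
  proof (rule bdd_belowI)
    fix x assume "x \<in> {x. 0 < capacity_cdf M w X x}"
    with zero[of x] show "-B \<le> x" by (cases "x \<le> -B") auto
  qed
qed

lemma ex_capacity_cdf_eq_1:
  assumes "capacity M w" and "bounded (X ` space M)"
  obtains x where "capacity_cdf M w X x = 1"
proof -
  obtain B where B: "\<And>\<omega>. \<omega> \<in> space M \<Longrightarrow> \<bar>X \<omega>\<bar> \<le> B"
    using assms(2) unfolding bounded_iff by auto
  have "capacity_cdf M w X (B + 1) = 1"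
  proof (rule capacity_cdf_above_range[OF assms(1)])
    fix \<omega> assume "\<omega> \<in> space M"
    with B[of \<omega>] show "X \<omega> < B + 1" by linarith
  qed
  then show ?thesis by (rule that)
qed

theorem proposition6:
  fixes M :: "'a measure" and X :: "'a \<Rightarrow> real" and w :: "'a set \<Rightarrow> real"
  assumes "X \<in> borel_measurable M"
    and "bounded (X ` space M)"
    and "capacity M w"
  shows "(\<forall>a\<in>{0<..1}. continuous (at_left a) (lower_quantile M w X))
       \<and> (\<forall>a\<in>{0..<1}. continuous (at_right a) (upper_quantile M w X))"
proof -
  let ?F = "capacity_cdf M w X"
  have bdd: "bdd_below {x. 0 < ?F x}"
    using assms(3,2) by (rule bdd_below_capacity_cdf_pos)
  obtain x1 where "?F x1 = 1"
    using assms(3,2) by (rule ex_capacity_cdf_eq_1)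
  show ?thesis
    unfolding lower_quantile_eq_Inf_capacity_cdf[abs_def] upper_quantile_eq_Inf_capacity_cdf[abs_def]
  proof (intro conjI ballI)
    fix a :: real assume a: "a \<in> {0<..1}"
    with \<open>?F x1 = 1\<close> have "x1 \<in> {x. a \<le> ?F x}" by simp
    then have "{x. a \<le> ?F x} \<noteq> {}" by blast
    moreover have "bdd_below {x. a / 2 \<le> ?F x}"
      using bdd by (rule bdd_below_mono) (use a in auto)
    ultimately show "continuous (at_left a) (\<lambda>a. Inf {x. a \<le> ?F x})"
      using a mono_capacity_cdf[OF assms(3,1)]
      by (intro continuous_at_left_Inf_superlevel[where \<beta> = "a / 2"]) auto
  next
    fix a :: real assume a: "a \<in> {0..<1}"
    have "bdd_below {x. a < ?F x}"
      using bdd by (rule bdd_below_mono) (use a in auto)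
    then show "continuous (at_right a) (\<lambda>a. Inf {x. a < ?F x})"
      by (rule continuous_at_right_Inf_strict_superlevel)
  qed
qed

end
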